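(* Assume $E\setminus T\ne\emptyset$, and let $\epsilon>0$, $0<p<1$, $K=\lceil\tau\ln\frac{n}{\epsilon p}\rceil$. Let $e_1,\dots,e_K$ be drawn independently from $(p_e)_{e\in E\setminus T}$, and let $F_K=\Pi_{e_K}\cdots\Pi_{e_1}R^{-1}B_TL_T^\dagger$ and $V_K=L_T^\dagger B_T^TF_K$. Then with probability at least $1-p$, \[ (F_K-R^{-1}BL^\dagger)^TR(F_K-R^{-1}BL^\dagger)\preceq\epsilon L_T^\dagger\preceq\epsilon\,\mathrm{st}(T)\,L^\dagger \] and \[ (V_K-L^\dagger)^TL(V_K-L^\dagger)\preceq\epsilon\,\mathrm{st}(T)^2L^\dagger . \]
   Context: Let $G=(V,E,w)$ be a connected undirected graph with $n=|V|$, resistances $r_e=1/w_e>0$ and fixed edge orientations $(a,b)$. The incidence matrix $B\in\mathbb{R}^{E\times V}$ has $B_{(a,b),c}=1$ if $c=a$, $-1$ if $c=b$, $0$ otherwise; $R=\mathrm{diag}(r_e)_{e\in E}$; $L=B^TR^{-1}B$ with pseudoinverse $L^\dagger$; $\preceq$ is the Loewner order. Let $T\subseteq E$ be a spanning tree; $B_T\in\mathbb{R}^{E\times V}$ equals $B$ on rows indexed by $T$ and is zero on rows indexed by $E\setminus T$; $L_T=B_T^TR^{-1}B_T$ with pseudoinverse $L_T^\dagger$. For vertices $a,b$, $\pi_{(a,b)}\in\mathbb{R}^E$ is the unit flow from $a$ to $b$ along the unique tree path, and $P_{(a,b)}$ its edge set. For $e=(a,b)\in E\setminus T$, $c_e=\mathbf{1}_e-\pi_{(a,b)}$,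 $R_e=c_e^TRc_e$, $\Pi_e=I-\frac{c_ec_e^TR}{c_e^TRc_e}$; $\tau=\sum_{e\in E\setminus T}R_e/r_e$; $p_e=\frac{R_e}{r_e\tau}$. The stretch of $e=(a,b)\in E$ is $\mathrm{st}(e)=\frac1{r_e}\sum_{e'\in P_{(a,b)}}r_{e'}$ and $\mathrm{st}(T)=\sum_{e\in E}\mathrm{st}(e)$. *)

theory Defs
  imports "HOL-Analysis.Analysis"
begin

text \<open>Resistances r e > 0. Matrices are HOL-Analysis matrices indexed by types;
  a matrix in R^{X x Y} is a value of type real^'y^'x (rows indexed by 'x).\<close>

definition ugraph_rel :: "('e::finite \<Rightarrow> 'v::finite) \<Rightarrow> ('e \<Rightarrow> 'v) \<Rightarrow> 'e set \<Rightarrow> ('v \<times> 'v) set" where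
  "ugraph_rel src tgt S = {(src e, tgt e) | e. e \<in> S} \<union> {(tgt e, src e) | e. e \<in> S}"

definition connected_by :: "('e::finite \<Rightarrow> 'v::finite) \<Rightarrow> ('e \<Rightarrow> 'v) \<Rightarrow> 'e set \<Rightarrow> bool" where
  "connected_by src tgt S \<longleftrightarrow> (\<forall>u v. (u, v) \<in> (ugraph_rel src tgt S)\<^sup>*)"

definition spanning_tree :: "('e::finite \<Rightarrow> 'v::finite) \<Rightarrow> ('e \<Rightarrow> 'v) \<Rightarrow> 'e set \<Rightarrow> bool" where
  "spanning_tree src tgt T \<longleftrightarrow> connected_by src tgt T \<and>
      (\<forall>e\<in>T. \<not> connected_by src tgt (T - {e}))"

definition incidence :: "('e::finite \<Rightarrow> 'v::finite) \<Rightarrow> ('e \<Rightarrow> 'v) \<Rightarrow> real^'v^'e" where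
  "incidence src tgt = (\<chi> e c. if c = src e then 1 else if c = tgt e then -1 else 0)"

definition incidence_on :: "('e::finite \<Rightarrow> 'v::finite) \<Rightarrow> ('e \<Rightarrow> 'v) \<Rightarrow> 'e set \<Rightarrow> real^'v^'e" where
  "incidence_on src tgt T = (\<chi> e c. if e \<in> T then incidence src tgt $ e $ c else 0)"

definition diag_mat :: "('n \<Rightarrow> real) \<Rightarrow> real^'n^'n" where
  "diag_mat d = (\<chi> i j. if i = j then d i else 0)"

definition outer :: "real^'m \<Rightarrow> real^'n \<Rightarrow> real^'n^'m" where
  "outer u v = (\<chi> i j. u $ i * v $ j)"

definition pinv :: "real^'n^'m \<Rightarrow> real^'m^'n" where
  "pinv A = (THE X. A ** X ** A = A \<and> X ** A ** X = X \<and>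
      transpose (A ** X) = A ** X \<and> transpose (X ** A) = X ** A)"

definition psd :: "real^'n^'n \<Rightarrow> bool" where
  "psd M \<longleftrightarrow> transpose M = M \<and> (\<forall>x. 0 \<le> x \<bullet> (M *v x))"

definition loewner_le :: "real^'n^'n \<Rightarrow> real^'n^'n \<Rightarrow> bool" (infix "\<preceq>\<^sub>L" 50) where
  "A \<preceq>\<^sub>L B \<longleftrightarrow> psd (B - A)"

definition laplacian :: "('e::finite \<Rightarrow> 'v::finite) \<Rightarrow> ('e \<Rightarrow> 'v) \<Rightarrow> ('e \<Rightarrow> real) \<Rightarrow> 'e set \<Rightarrow> real^'v^'v" where
  "laplacian src tgt r S = transpose (incidence_on src tgt S) ** diag_mat (\<lambda>e. 1 / r e)
      ** incidence_on src tgt S"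

definition indic_vec :: "'n \<Rightarrow> real^'n" where
  "indic_vec a = (\<chi> i. if i = a then 1 else 0)"

definition tree_flow :: "('e::finite \<Rightarrow> 'v::finite) \<Rightarrow> ('e \<Rightarrow> 'v) \<Rightarrow> 'e set \<Rightarrow> 'v \<Rightarrow> 'v \<Rightarrow> real^'e" where
  "tree_flow src tgt T a b = (THE f. (\<forall>e. e \<notin> T \<longrightarrow> f $ e = 0) \<and>
      transpose (incidence src tgt) *v f = indic_vec a - indic_vec b)"

definition tree_path :: "('e::finite \<Rightarrow> 'v::finite) \<Rightarrow> ('e \<Rightarrow> 'v) \<Rightarrow> 'e set \<Rightarrow> 'v \<Rightarrow> 'v \<Rightarrow> 'e set" where
  "tree_path src tgt T a b = {e \<in> T. tree_flow src tgt T a b $ e \<noteq> 0}"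

definition stretch :: "('e::finite \<Rightarrow> 'v::finite) \<Rightarrow> ('e \<Rightarrow> 'v) \<Rightarrow> ('e \<Rightarrow> real) \<Rightarrow> 'e set \<Rightarrow> 'e \<Rightarrow> real" where
  "stretch src tgt r T e = (1 / r e) * (\<Sum>e'\<in>tree_path src tgt T (src e) (tgt e). r e')"

definition stretch_tree :: "('e::finite \<Rightarrow> 'v::finite) \<Rightarrow> ('e \<Rightarrow> 'v) \<Rightarrow> ('e \<Rightarrow> real) \<Rightarrow> 'e set \<Rightarrow> real" where
  "stretch_tree src tgt r T = (\<Sum>e\<in>UNIV. stretch src tgt r T e)"

definition cycle_vec :: "('e::finite \<Rightarrow> 'v::finite) \<Rightarrow> ('e \<Rightarrow> 'v) \<Rightarrow> 'e set \<Rightarrow> 'e \<Rightarrow> real^'e" where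
  "cycle_vec src tgt T e = indic_vec e - tree_flow src tgt T (src e) (tgt e)"

definition cycle_res :: "('e::finite \<Rightarrow> 'v::finite) \<Rightarrow> ('e \<Rightarrow> 'v) \<Rightarrow> ('e \<Rightarrow> real) \<Rightarrow> 'e set \<Rightarrow> 'e \<Rightarrow> real" where
  "cycle_res src tgt r T e = (let c = cycle_vec src tgt T e in c \<bullet> (diag_mat r *v c))"

definition proj_e :: "('e::finite \<Rightarrow> 'v::finite) \<Rightarrow> ('e \<Rightarrow> 'v) \<Rightarrow> ('e \<Rightarrow> real) \<Rightarrow> 'e set \<Rightarrow> 'e \<Rightarrow> real^'e^'e" where
  "proj_e src tgt r T e = (let c = cycle_vec src tgt T e in
      mat 1 - (1 / cycle_res src tgt r T e) *\<^sub>R (outer c c ** diag_mat r))"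

definition tau :: "('e::finite \<Rightarrow> 'v::finite) \<Rightarrow> ('e \<Rightarrow> 'v) \<Rightarrow> ('e \<Rightarrow> real) \<Rightarrow> 'e set \<Rightarrow> real" where
  "tau src tgt r T = (\<Sum>e\<in>UNIV - T. cycle_res src tgt r T e / r e)"

definition edge_prob :: "('e::finite \<Rightarrow> 'v::finite) \<Rightarrow> ('e \<Rightarrow> 'v) \<Rightarrow> ('e \<Rightarrow> real) \<Rightarrow> 'e set \<Rightarrow> 'e \<Rightarrow> real" where
  "edge_prob src tgt r T e = cycle_res src tgt r T e / (r e * tau src tgt r T)"

text \<open>Pi_{e_K} ... Pi_{e_1} for the list [e_1, ..., e_K].\<close>
definition proj_prod :: "('e::finite \<Rightarrow> 'v::finite) \<Rightarrow> ('e \<Rightarrow> 'v) \<Rightarrow> ('e \<Rightarrow> real) \<Rightarrow> 'e set \<Rightarrow> 'e list \<Rightarrow> real^'e^'e" where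
  "proj_prod src tgt r T es = fold (\<lambda>e M. proj_e src tgt r T e ** M) es (mat 1)"

text \<open>Probability that K i.i.d. draws e_1..e_K from the distribution q on the set D satisfy P:
  the total weight of all length-K sequences over D satisfying P.\<close>
definition iid_prob :: "('e \<Rightarrow> real) \<Rightarrow> 'e set \<Rightarrow> nat \<Rightarrow> ('e list \<Rightarrow> bool) \<Rightarrow> real" where
  "iid_prob q D K P = (\<Sum>es\<in>{es. set es \<subseteq> D \<and> length es = K}.
      if P es then prod_list (map q es) else 0)"

end

theory Submission
  imports Defs
begin

text \<open>Each Pi_e is the R-orthogonal projection killing the component of a circulation along the
  fundamental cycle c_e. Since the cycles c_e (e not in T) span the circulations, Cauchy-Schwarz gives
  x^T R x <= sum_e (c_e^T R x)^2 / r_e, so one random projection shrinks the expected energy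
  of any circulation by the factor 1 - 1/tau. Every Pi_e fixes potential flows, hence
  F_K - R^-1 B L^+ = Pi_(e_K) ... Pi_(e_1) D L_T^+ where D maps into circulations. The error is measured by the
  potential Phi(X) = trace (R X L_T^+ X^T): it bounds the energy of X z by Phi(X) z^T L_T z, starts
  at most n - 1 for X = D, and decays geometrically in expectation, so after K steps
  E[Phi] <= epsilon p and Markov's inequality applies. The comparisons with L^+ come from
  x^T L x <= st(T) x^T L_T x, obtained by routing each edge along its tree path.\<close>

section \<open>Matrices and vectors\<close>

lemma inner_matrix_vector: "(A *v x) \<bullet> y = x \<bullet> (transpose A *v y)"
  for A :: "real^'n^'m"
  by (metis dot_lmul_matrix inner_commute transpose_matrix_vector)

lemma transpose_diff: "transpose (A - B) = transpose A - transpose (B :: real^'n^'m)"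
  by (simp add: transpose_def vec_eq_iff)

lemma matrix_add_rdistrib: "((A :: real^'n^'m) + B) ** C = A ** C + B ** C"
  by (simp add: matrix_eq matrix_vector_mul_assoc[symmetric] algebra_simps)

lemma matrix_diff_ldistrib: "(A :: real^'n^'m) ** (B - C) = A ** B - A ** C"
  by (simp add: matrix_eq matrix_vector_mul_assoc[symmetric] algebra_simps)

lemma matrix_diff_rdistrib: "((A :: real^'n^'m) - B) ** C = A ** C - B ** C"
  by (simp add: matrix_eq matrix_vector_mul_assoc[symmetric] algebra_simps)

lemma matrix_vector_sum: "(A :: real^'n^'m) *v (\<Sum>i\<in>I. f i) = (\<Sum>i\<in>I. A *v f i)"
  by (induction I rule: infinite_finite_induct) (simp_all add: matrix_vector_right_distrib)

lemma inner_transpose_mult_mult: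
  "y \<bullet> ((transpose X ** A ** X) *v y) = (X *v y) \<bullet> (A *v (X *v y))"
  for X :: "real^'n^'m"
  by (simp add: matrix_vector_mul_assoc[symmetric] inner_matrix_vector del: transpose_matrix_vector)

lemma transpose_congruence:
  "transpose A = A \<Longrightarrow> transpose (transpose X ** A ** X) = transpose X ** A ** (X :: real^'n^'m)"
  by (simp add: matrix_transpose_mul matrix_mul_assoc)

lemma diag_mat_vector: "diag_mat d *v x = (\<chi> i. d i * x $ i)"
  by (simp add: diag_mat_def matrix_vector_mult_def vec_eq_iff if_distrib if_distribR cong: if_cong)

lemma transpose_diag_mat [simp]: "transpose (diag_mat d) = diag_mat d"
  by (simp add: diag_mat_def transpose_def vec_eq_iff)

lemma inner_diag_mat: "u \<bullet> (diag_mat d *v v) = (\<Sum>i\<in>UNIV. d i * u $ i * v $ i)"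
  by (simp add: inner_vec_def diag_mat_vector mult_ac)

lemma indic_vec_nth: "indic_vec a $ i = (if i = a then 1 else 0)"
  by (simp add: indic_vec_def)

lemma inner_indic_vec: "indic_vec a \<bullet> x = x $ a"
  by (simp add: inner_vec_def indic_vec_nth if_distrib if_distribR cong: if_cong)

lemma outer_vector: "outer u v *v x = (v \<bullet> x) *\<^sub>R u"
  by (simp add: outer_def matrix_vector_mult_def vec_eq_iff inner_vec_def sum_distrib_left mult_ac)

lemma loewner_le_formI:
  assumes "transpose A = A" "transpose B = B" "\<And>x. x \<bullet> (A *v x) \<le> x \<bullet> (B *v x)"
  shows "A \<preceq>\<^sub>L B"
  using assms
  by (simp add: loewner_le_def psd_def transpose_diff matrix_vector_mult_diff_rdistrib inner_diff_right)

lemma pinv_eqI: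
  fixes A :: "real^'n^'m" and X :: "real^'m^'n"
  assumes AXA: "A ** X ** A = A" and XAX: "X ** A ** X = X"
    and AX: "transpose (A ** X) = A ** X" and XA: "transpose (X ** A) = X ** A"
  shows "pinv A = X"
  unfolding pinv_def
proof (rule the_equality)
  fix Y assume "A ** Y ** A = A \<and> Y ** A ** Y = Y \<and> transpose (A ** Y) = A ** Y \<and> transpose (Y ** A) = Y ** A"
  then have AYA: "A ** Y ** A = A" and YAY: "Y ** A ** Y = Y"
    and AY: "transpose (A ** Y) = A ** Y" and YA: "transpose (Y ** A) = Y ** A"
    by auto
  have "A ** X = transpose (A ** Y) ** transpose (A ** X)"
    by (metis AX AY AYA matrix_mul_assoc)
  also have "\<dots> = A ** Y"
    by (metis AXA AY matrix_mul_assoc matrix_transpose_mul)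
  finally have AX_AY: "A ** X = A ** Y" .
  have "X ** A = transpose (X ** A) ** transpose (Y ** A)"
    by (metis XA YA AYA matrix_mul_assoc)
  also have "\<dots> = Y ** A"
    by (metis AXA YA matrix_mul_assoc matrix_transpose_mul)
  finally have XA_YA: "X ** A = Y ** A" .
  show "Y = X"
    by (metis AX_AY XA_YA XAX YAY matrix_mul_assoc)
qed (use assms in blast)

lemma Cauchy_Schwarz_ineq_sum_weighted:
  fixes a b w :: "'i \<Rightarrow> real"
  assumes "\<And>i. i \<in> I \<Longrightarrow> 0 \<le> w i"
  shows "(\<Sum>i\<in>I. w i * a i * b i)\<^sup>2 \<le> (\<Sum>i\<in>I. w i * (a i)\<^sup>2) * (\<Sum>i\<in>I. w i * (b i)\<^sup>2)"
  using Cauchy_Schwarz_ineq_sum[of "\<lambda>i. sqrt (w i) * a i" "\<lambda>i. sqrt (w i) * b i" I] assms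
  by (simp add: power_mult_distrib mult_ac cong: sum.cong)

lemma Cauchy_Schwarz_ineq_sum_divide:
  fixes a b w :: "'i \<Rightarrow> real"
  assumes "\<And>i. i \<in> I \<Longrightarrow> 0 < w i"
  shows "(\<Sum>i\<in>I. a i * b i)\<^sup>2 \<le> (\<Sum>i\<in>I. w i * (a i)\<^sup>2) * (\<Sum>i\<in>I. (b i)\<^sup>2 / w i)"
proof -
  have "w i \<noteq> 0" if "i \<in> I" for i
    using assms[OF that] by simp
  then have "(\<Sum>i\<in>I. a i * b i) = (\<Sum>i\<in>I. w i * a i * (b i / w i))"
    "(\<Sum>i\<in>I. (b i)\<^sup>2 / w i) = (\<Sum>i\<in>I. w i * (b i / w i)\<^sup>2)"
    by (auto simp: power2_eq_square intro!: sum.cong)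
  then show ?thesis
    using Cauchy_Schwarz_ineq_sum_weighted[of I w a "\<lambda>i. b i / w i"] assms by (simp add: less_imp_le)
qed

lemma le_of_square_le_mult:
  fixes a b :: real
  assumes "0 \<le> b" "a\<^sup>2 \<le> a * b"
  shows "a \<le> b"
  using assms by (cases "0 < a") (auto simp: power2_eq_square)

definition ones :: "real^'n" where
  "ones = (\<chi> i. 1)"

definition avg_mat :: "real^'n^'n" where
  "avg_mat = (1 / real CARD('n)) *\<^sub>R outer ones ones"

lemma ones_nth [simp]: "ones $ i = 1"
  by (simp add: ones_def)

lemma inner_ones: "ones \<bullet> x = (\<Sum>i\<in>UNIV. x $ i)"
  by (simp add: inner_vec_def)

lemma avg_mat_vector: "avg_mat *v x = ((\<Sum>i\<in>UNIV. x $ i) / real CARD('n)) *\<^sub>R (ones :: real^'n)"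
  by (simp add: avg_mat_def outer_vector inner_ones scaleR_matrix_vector_assoc[symmetric])

lemma transpose_avg_mat [simp]: "transpose (avg_mat :: real^'n^'n) = avg_mat"
  by (simp add: avg_mat_def outer_def transpose_def vec_eq_iff)

lemma avg_mat_ones: "avg_mat *v ones = (ones :: real^'n)"
  by (simp add: avg_mat_vector)

lemma avg_mat_idem: "avg_mat ** avg_mat = (avg_mat :: real^'n^'n)"
  by (simp add: matrix_eq matrix_vector_mul_assoc[symmetric] avg_mat_vector
      scaleR_matrix_vector_assoc[symmetric] matrix_vector_mult_scaleR)

lemma inner_avg_mat: "x \<bullet> (avg_mat *v x) = (\<Sum>i\<in>UNIV. x $ i)\<^sup>2 / real CARD('n)"
  for x :: "real^'n"
  by (simp add: avg_mat_vector inner_commute[of x] inner_ones power2_eq_square)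

lemma avg_mat_eq_0: "ones \<bullet> y = 0 \<Longrightarrow> avg_mat *v y = (0 :: real^'n)"
  by (simp add: avg_mat_vector inner_ones)

lemma inner_avg_mat_eq_0: "ones \<bullet> g = 0 \<Longrightarrow> (avg_mat *v y) \<bullet> g = (0 :: real)"
  for g :: "real^'n"
  by (simp add: avg_mat_vector inner_commute)

section \<open>Laplacians of resistor networks\<close>

locale network =
  fixes src tgt :: "'e::finite \<Rightarrow> 'v::finite" and r :: "'e \<Rightarrow> real"
  assumes no_loops: "\<And>e. src e \<noteq> tgt e"
    and r_pos: "\<And>e. 0 < r e"
begin

abbreviation "B \<equiv> incidence src tgt"
abbreviation "R \<equiv> diag_mat r"
abbreviation "R_inv \<equiv> diag_mat (\<lambda>e. 1 / r e)"

definition edge_vec :: "'e \<Rightarrow> real^'v" where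
  "edge_vec e = indic_vec (src e) - indic_vec (tgt e)"

definition energy :: "real^'e \<Rightarrow> real" where
  "energy f = f \<bullet> (R *v f)"

lemma inner_edge_vec: "edge_vec e \<bullet> x = x $ src e - x $ tgt e"
  by (simp add: edge_vec_def inner_diff_left inner_indic_vec)

lemma incidence_on_nth: "incidence_on src tgt S $ e $ v = (if e \<in> S then edge_vec e $ v else 0)"
  using no_loops[of e] by (auto simp: incidence_on_def incidence_def edge_vec_def indic_vec_nth)

lemma incidence_on_UNIV [simp]: "incidence_on src tgt UNIV = B"
  by (simp add: incidence_on_def vec_eq_iff)

lemma incidence_on_vector:
  "(incidence_on src tgt S *v x) $ e = (if e \<in> S then edge_vec e \<bullet> x else 0)"
  by (simp add: matrix_vector_mult_def incidence_on_nth inner_vec_def if_distrib if_distribR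
      cong: if_cong)

lemma transpose_incidence_on_vector:
  "transpose (incidence_on src tgt S) *v f = (\<Sum>e\<in>S. f $ e *\<^sub>R edge_vec e)"
proof -
  have "(transpose (incidence_on src tgt S) *v f) $ v = (\<Sum>e\<in>UNIV. if e \<in> S then f $ e * edge_vec e $ v else 0)"
    for v by (simp add: vector_matrix_mult_def incidence_on_nth if_distrib if_distribR cong: if_cong)
  then show ?thesis
    by (simp add: vec_eq_iff sum_component sum.If_cases del: transpose_matrix_vector)
qed

lemma transpose_incidence_indic_vec: "transpose B *v indic_vec e = edge_vec e"
  using transpose_incidence_on_vector[of UNIV "indic_vec e"]
  by (simp add: indic_vec_nth if_distrib if_distribR cong: if_cong del: transpose_matrix_vector)

lemma incidence_on_ones: "incidence_on src tgt S *v ones = 0"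
  by (simp add: vec_eq_iff incidence_on_vector inner_edge_vec)

lemma R_inv_incidence_on_nth:
  "(R_inv *v (incidence_on src tgt S *v x)) $ e
     = (if e \<in> S then (edge_vec e \<bullet> x) / r e else 0)"
  by (simp add: diag_mat_vector incidence_on_vector)

lemma laplacian_vector:
  "laplacian src tgt r S *v x = (\<Sum>e\<in>S. ((edge_vec e \<bullet> x) / r e) *\<^sub>R edge_vec e)"
  by (simp add: laplacian_def matrix_vector_mul_assoc[symmetric] transpose_incidence_on_vector
      R_inv_incidence_on_nth del: transpose_matrix_vector)

lemma transpose_incidence_on_R_inv_incidence_on:
  "transpose (incidence_on src tgt S') *v (R_inv *v (incidence_on src tgt S *v x))
     = laplacian src tgt r (S \<inter> S') *v x"
  by (simp add: transpose_incidence_on_vector R_inv_incidence_on_nth laplacian_vector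
      if_distrib if_distribR sum.If_cases Int_commute cong: if_cong del: transpose_matrix_vector)

lemma laplacian_form:
  "x \<bullet> (laplacian src tgt r S *v y) = (\<Sum>e\<in>S. (edge_vec e \<bullet> x) * (edge_vec e \<bullet> y) / r e)"
  by (simp add: laplacian_vector inner_sum_right inner_commute[of x] mult_ac)

lemma transpose_laplacian: "transpose (laplacian src tgt r S) = laplacian src tgt r S"
  by (simp add: laplacian_def matrix_transpose_mul matrix_mul_assoc)

lemma laplacian_ones: "laplacian src tgt r S *v ones = 0"
  by (simp add: laplacian_vector inner_edge_vec)

lemma inner_ones_laplacian: "ones \<bullet> (laplacian src tgt r S *v x) = 0"
  by (metis inner_matrix_vector laplacian_ones transpose_laplacian inner_zero_left inner_commute)

lemma laplacian_psd: "0 \<le> x \<bullet> (laplacian src tgt r S *v x)"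
  unfolding laplacian_form by (intro sum_nonneg) (simp add: r_pos less_imp_le)

lemma laplacian_Cauchy_Schwarz:
  "(h \<bullet> (laplacian src tgt r S *v g))\<^sup>2
     \<le> (h \<bullet> (laplacian src tgt r S *v h)) * (g \<bullet> (laplacian src tgt r S *v g))"
  using Cauchy_Schwarz_ineq_sum_weighted[of S "\<lambda>e. 1 / r e" "\<lambda>e. edge_vec e \<bullet> h" "\<lambda>e. edge_vec e \<bullet> g"]
  by (simp add: laplacian_form r_pos less_imp_le power2_eq_square)

lemma energy_eq_sum: "energy f = (\<Sum>e\<in>UNIV. r e * (f $ e)\<^sup>2)"
  by (simp add: energy_def inner_diag_mat power2_eq_square mult_ac)

lemma energy_nonneg: "0 \<le> energy f"
  unfolding energy_eq_sum by (intro sum_nonneg) (simp add: r_pos less_imp_le)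

lemma inner_diag_commute: "u \<bullet> (R *v v) = v \<bullet> (R *v u)"
  by (simp add: inner_diag_mat mult_ac)

lemma energy_Cauchy_Schwarz: "(u \<bullet> (R *v v))\<^sup>2 \<le> energy u * energy v"
  using Cauchy_Schwarz_ineq_sum_weighted[of UNIV r "\<lambda>e. u $ e" "\<lambda>e. v $ e"]
  by (simp add: inner_diag_mat energy_eq_sum r_pos less_imp_le)

lemma energy_diff: "energy (u - v) = energy u - 2 * (u \<bullet> (R *v v)) + energy v"
  by (simp add: energy_def matrix_vector_mult_diff_distrib inner_diff_left inner_diff_right
      inner_diag_commute[of v u])

lemma R_R_inv_vector: "R *v (R_inv *v z) = z"
  using r_pos by (simp add: diag_mat_vector vec_eq_iff less_imp_neq[symmetric])

lemma energy_potential_flow: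
  "energy (R_inv *v (incidence_on src tgt S *v x)) = x \<bullet> (laplacian src tgt r S *v x)"
  by (metis energy_def R_R_inv_vector inner_commute inner_matrix_vector
      transpose_incidence_on_R_inv_incidence_on Int_absorb)

end


lemma connected_by_mono:
  assumes "S \<subseteq> S'" "connected_by src tgt S"
  shows "connected_by src tgt S'"
proof -
  have "ugraph_rel src tgt S \<subseteq> ugraph_rel src tgt S'"
    using assms(1) unfolding ugraph_rel_def by blast
  then show ?thesis
    using assms(2) rtrancl_mono unfolding connected_by_def by blast
qed

locale connected_network = network src tgt r
  for src tgt :: "'e::finite \<Rightarrow> 'v::finite" and r :: "'e \<Rightarrow> real" +
  fixes S :: "'e set"
  assumes connected: "connected_by src tgt S"
begin

abbreviation "L \<equiv> laplacian src tgt r S"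

lemma laplacian_form_eq_0_imp_const:
  assumes "x \<bullet> (L *v x) = 0"
  shows "x $ u = x $ v"
proof -
  have "(\<Sum>e\<in>S. (edge_vec e \<bullet> x)\<^sup>2 / r e) = 0"
    using assms by (simp add: laplacian_form power2_eq_square)
  then have "\<forall>e\<in>S. (edge_vec e \<bullet> x)\<^sup>2 / r e = 0"
    by (subst (asm) sum_nonneg_eq_0_iff) (auto simp: r_pos less_imp_le)
  moreover have "r e \<noteq> 0" for e
    using r_pos[of e] by simp
  ultimately have edge: "x $ src e = x $ tgt e" if "e \<in> S" for e
    using that by (simp add: inner_edge_vec)
  have "(u, v) \<in> (ugraph_rel src tgt S)\<^sup>*"
    using connected by (simp add: connected_by_def)
  then show ?thesis
    by (induction rule: rtrancl_induct) (auto simp: ugraph_rel_def edge)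
qed

lemma laplacian_avg_mat_invertible: "invertible (L + avg_mat)"
proof -
  have "x = 0" if "(L + avg_mat) *v x = 0" for x
  proof -
    have sum0: "x \<bullet> (L *v x) + (\<Sum>i\<in>UNIV. x $ i)\<^sup>2 / real CARD('v) = 0"
      using that by (metis inner_avg_mat inner_add_right inner_zero_right matrix_vector_mult_add_rdistrib)
    have "0 \<le> (\<Sum>i\<in>UNIV. x $ i)\<^sup>2 / real CARD('v)"
      by simp
    then have L0: "x \<bullet> (L *v x) = 0" and "(\<Sum>i\<in>UNIV. x $ i)\<^sup>2 / real CARD('v) = 0"
      using sum0 laplacian_psd[of x S] by linarith+
    then have sum0: "(\<Sum>i\<in>UNIV. x $ i) = 0"
      by simp
    obtain c where "\<And>i. x $ i = c"
      using laplacian_form_eq_0_imp_const[OF L0] by blast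
    with sum0 show "x = 0"
      by (simp add: vec_eq_iff)
  qed
  then show ?thesis
    using matrix_left_invertible_ker invertible_left_inverse by blast
qed

abbreviation "L_avg_inv \<equiv> matrix_inv (L + avg_mat)"

lemma laplacian_avg_mat_inverse:
  "(L + avg_mat) ** L_avg_inv = mat 1" "L_avg_inv ** (L + avg_mat) = mat 1"
proof -
  have "\<exists>A. (L + avg_mat) ** A = mat 1 \<and> A ** (L + avg_mat) = mat 1"
    using laplacian_avg_mat_invertible by (simp add: invertible_def)
  then show "(L + avg_mat) ** L_avg_inv = mat 1" "L_avg_inv ** (L + avg_mat) = mat 1"
    unfolding matrix_inv_def by (metis (mono_tags, lifting) someI_ex)+
qed

lemma laplacian_mult_avg_mat: "L ** avg_mat = 0" "avg_mat ** L = 0"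
  by (simp_all add: matrix_eq matrix_vector_mul_assoc[symmetric] avg_mat_vector
      matrix_vector_mult_scaleR laplacian_ones inner_ones_laplacian[unfolded inner_ones])

lemma L_avg_inv_mult_avg_mat: "L_avg_inv ** avg_mat = avg_mat" "avg_mat ** L_avg_inv = avg_mat"
proof -
  have "(L + avg_mat) ** avg_mat = avg_mat" "avg_mat ** (L + avg_mat) = avg_mat"
    by (simp_all add: matrix_add_rdistrib matrix_add_ldistrib laplacian_mult_avg_mat avg_mat_idem)
  then show "L_avg_inv ** avg_mat = avg_mat" "avg_mat ** L_avg_inv = avg_mat"
    by (metis laplacian_avg_mat_inverse matrix_mul_assoc matrix_mul_lid matrix_mul_rid)+
qed

lemma transpose_L_avg_inv: "transpose L_avg_inv = L_avg_inv"
proof -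
  have "transpose L_avg_inv ** (L + avg_mat) = mat 1"
    by (metis laplacian_avg_mat_inverse(1) matrix_transpose_mul transpose_mat transpose_laplacian
        transpose_avg_mat transpose_diff diff_add_cancel add_diff_cancel)
  then show ?thesis
    by (metis laplacian_avg_mat_inverse(1) matrix_mul_assoc matrix_mul_lid matrix_mul_rid)
qed

lemma laplacian_mult_L_avg_inv: "L ** L_avg_inv = mat 1 - avg_mat"
  using laplacian_avg_mat_inverse(1)
  by (simp add: matrix_add_rdistrib L_avg_inv_mult_avg_mat eq_diff_eq)

lemma L_avg_inv_mult_laplacian: "L_avg_inv ** L = mat 1 - avg_mat"
  using laplacian_avg_mat_inverse(2)
  by (simp add: matrix_add_ldistrib L_avg_inv_mult_avg_mat eq_diff_eq)

lemma pinv_laplacian_eq: "pinv L = L_avg_inv - avg_mat"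
proof (rule pinv_eqI)
  have LP: "L ** (L_avg_inv - avg_mat) = mat 1 - avg_mat"
    by (simp add: matrix_diff_ldistrib laplacian_mult_L_avg_inv laplacian_mult_avg_mat)
  have PL: "(L_avg_inv - avg_mat) ** L = mat 1 - avg_mat"
    by (simp add: matrix_diff_rdistrib L_avg_inv_mult_laplacian laplacian_mult_avg_mat)
  show "L ** (L_avg_inv - avg_mat) ** L = L"
    by (simp only: LP) (simp add: matrix_diff_rdistrib laplacian_mult_avg_mat)
  show "(L_avg_inv - avg_mat) ** L ** (L_avg_inv - avg_mat) = L_avg_inv - avg_mat"
    by (simp only: PL)
      (simp add: matrix_diff_rdistrib matrix_diff_ldistrib L_avg_inv_mult_avg_mat avg_mat_idem)
  show "transpose (L ** (L_avg_inv - avg_mat)) = L ** (L_avg_inv - avg_mat)"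
    "transpose ((L_avg_inv - avg_mat) ** L) = (L_avg_inv - avg_mat) ** L"
    by (simp_all only: LP PL) (simp_all add: transpose_diff)
qed

lemma laplacian_pinv: "L *v (pinv L *v y) = y - avg_mat *v y"
  by (simp only: matrix_vector_mul_assoc)
    (simp add: pinv_laplacian_eq matrix_diff_ldistrib
      laplacian_mult_L_avg_inv laplacian_mult_avg_mat matrix_vector_mult_diff_rdistrib)

lemma pinv_laplacian: "pinv L *v (L *v y) = y - avg_mat *v y"
  by (simp only: matrix_vector_mul_assoc)
    (simp add: pinv_laplacian_eq matrix_diff_rdistrib
      L_avg_inv_mult_laplacian laplacian_mult_avg_mat matrix_vector_mult_diff_rdistrib)

lemma transpose_pinv_laplacian: "transpose (pinv L) = pinv L"
  by (simp add: pinv_laplacian_eq transpose_diff transpose_L_avg_inv)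

lemma pinv_laplacian_ones: "pinv L *v ones = 0"
  by (metis pinv_laplacian_eq L_avg_inv_mult_avg_mat(1) avg_mat_ones matrix_vector_mul_assoc
      matrix_vector_mult_diff_rdistrib diff_self)

lemma inner_ones_pinv_laplacian: "ones \<bullet> (pinv L *v y) = 0"
  by (metis inner_matrix_vector transpose_pinv_laplacian pinv_laplacian_ones inner_zero_left
      inner_commute)

lemma pinv_laplacian_avg_mat: "pinv L *v (avg_mat *v y) = 0"
  by (simp add: avg_mat_vector matrix_vector_mult_scaleR pinv_laplacian_ones)

lemma pinv_laplacian_form: "(pinv L *v y) \<bullet> (L *v (pinv L *v y)) = y \<bullet> (pinv L *v y)"
  by (simp add: laplacian_pinv inner_diff_right inner_commute[of _ "avg_mat *v y"]
      inner_avg_mat_eq_0[OF inner_ones_pinv_laplacian] inner_commute[of y])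

lemma pinv_laplacian_psd: "0 \<le> y \<bullet> (pinv L *v y)"
  using laplacian_psd[of "pinv L *v y" S] by (simp add: pinv_laplacian_form)


text \<open>This is trace (R X L^+ X^T), written via L = (sum over e in S of b_e b_e^T / r_e).\<close>

definition potential :: "real^'v^'e \<Rightarrow> real" where
  "potential X = (\<Sum>e\<in>S. energy (X *v (pinv L *v edge_vec e)) / r e)"

lemma potential_nonneg: "0 \<le> potential X"
  unfolding potential_def by (intro sum_nonneg divide_nonneg_pos energy_nonneg r_pos)

lemma matrix_vector_eq_sum_pinv_edge_vec:
  assumes "X *v ones = 0"
  shows "X *v z = (\<Sum>e\<in>S. ((edge_vec e \<bullet> z) / r e) *\<^sub>R (X *v (pinv L *v edge_vec e)))"
proof -
  have "X *v (avg_mat *v z) = 0"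
    using assms by (simp add: avg_mat_vector matrix_vector_mult_scaleR)
  then have "X *v z = X *v (pinv L *v (L *v z))"
    by (simp add: pinv_laplacian matrix_vector_mult_diff_distrib)
  then show ?thesis
    by (simp add: laplacian_vector matrix_vector_sum matrix_vector_mult_scaleR)
qed

lemma energy_le_potential:
  assumes "X *v ones = 0"
  shows "energy (X *v z) \<le> potential X * (z \<bullet> (L *v z))"
proof -
  define q where "q e = (X *v (pinv L *v edge_vec e)) \<bullet> (R *v (X *v z))" for e
  have "energy (X *v z)
      = (\<Sum>e\<in>S. ((edge_vec e \<bullet> z) / r e) *\<^sub>R (X *v (pinv L *v edge_vec e))) \<bullet> (R *v (X *v z))"
    unfolding energy_def by (subst matrix_vector_eq_sum_pinv_edge_vec[OF assms]) (rule refl)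
  also have "\<dots> = (\<Sum>e\<in>S. (1 / r e) * (edge_vec e \<bullet> z) * q e)"
    by (simp add: inner_sum_left q_def)
  finally have "(energy (X *v z))\<^sup>2
      \<le> (\<Sum>e\<in>S. (1 / r e) * (edge_vec e \<bullet> z)\<^sup>2) * (\<Sum>e\<in>S. (1 / r e) * (q e)\<^sup>2)"
    using Cauchy_Schwarz_ineq_sum_weighted[of S "\<lambda>e. 1 / r e" "\<lambda>e. edge_vec e \<bullet> z" q]
    by (simp add: r_pos less_imp_le)
  also have "\<dots> \<le> (z \<bullet> (L *v z)) * (potential X * energy (X *v z))"
  proof (rule mult_mono)
    show "(\<Sum>e\<in>S. (1 / r e) * (edge_vec e \<bullet> z)\<^sup>2) \<le> z \<bullet> (L *v z)"
      by (simp add: laplacian_form power2_eq_square)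
    have "(1 / r e) * (q e)\<^sup>2 \<le> (1 / r e) * (energy (X *v (pinv L *v edge_vec e)) * energy (X *v z))"
      for e unfolding q_def by (intro mult_left_mono energy_Cauchy_Schwarz) (simp add: r_pos less_imp_le)
    then show "(\<Sum>e\<in>S. (1 / r e) * (q e)\<^sup>2) \<le> potential X * energy (X *v z)"
      unfolding potential_def sum_distrib_right by (intro sum_mono) simp
  qed (simp_all add: laplacian_psd sum_nonneg r_pos less_imp_le)
  finally have "(energy (X *v z))\<^sup>2 \<le> energy (X *v z) * (potential X * (z \<bullet> (L *v z)))"
    by (simp only: mult_ac)
  then show ?thesis
    by (rule le_of_square_le_mult[rotated]) (simp add: potential_nonneg laplacian_psd)
qed

lemma sum_edge_pinv_laplacian_form:
  "(\<Sum>e\<in>S. (edge_vec e \<bullet> (pinv L *v edge_vec e)) / r e) = real CARD('v) - 1"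
proof -
  have "edge_vec e \<bullet> (pinv L *v indic_vec i) = (pinv L *v edge_vec e) $ i" for e i
    by (metis inner_matrix_vector transpose_pinv_laplacian inner_indic_vec inner_commute)
  then have "(\<Sum>e\<in>S. (edge_vec e \<bullet> (pinv L *v edge_vec e)) / r e)
      = (\<Sum>i\<in>UNIV. \<Sum>e\<in>S. (edge_vec e \<bullet> (pinv L *v indic_vec i)) / r e * edge_vec e $ i)"
    by (simp add: inner_vec_def sum_divide_distrib mult_ac sum.swap[of _ S])
  also have "\<dots> = (\<Sum>i\<in>UNIV. (L *v (pinv L *v indic_vec i)) $ i)"
    by (simp add: laplacian_vector sum_component)
  also have "\<dots> = (\<Sum>i\<in>(UNIV :: 'v set). 1 - 1 / real CARD('v))"
    by (simp add: laplacian_pinv avg_mat_vector indic_vec_nth)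
  also have "\<dots> = real CARD('v) - 1"
    by (simp add: right_diff_distrib)
  finally show ?thesis .
qed

end

section \<open>Spanning trees, cycles and projections\<close>

locale tree_network = network src tgt r
  for src tgt :: "'e::finite \<Rightarrow> 'v::finite" and r :: "'e \<Rightarrow> real" +
  fixes T :: "'e set"
  assumes spanning_tree: "spanning_tree src tgt T"
begin

lemma connected_tree: "connected_by src tgt T"
  using spanning_tree by (simp add: spanning_tree_def)

sublocale tree: connected_network src tgt r T
  by unfold_locales (rule connected_tree)

sublocale graph: connected_network src tgt r UNIV
  by unfold_locales (rule connected_by_mono[OF subset_UNIV connected_tree])

text \<open>Deleting the tree edge e' leaves the component tree_cut e' of src e'; the only tree edge
  leaving it is e', so the net outflow of a flow supported on T from it is the flow on e'.\<close>

definition tree_cut :: "'e \<Rightarrow> 'v set" where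
  "tree_cut e' = {v. (src e', v) \<in> (ugraph_rel src tgt (T - {e'}))\<^sup>*}"

lemma src_in_tree_cut: "src e' \<in> tree_cut e'"
  by (simp add: tree_cut_def)

lemma tgt_notin_tree_cut:
  assumes "e' \<in> T"
  shows "tgt e' \<notin> tree_cut e'"
proof
  assume "tgt e' \<in> tree_cut e'"
  then have path: "(src e', tgt e') \<in> (ugraph_rel src tgt (T - {e'}))\<^sup>*"
    by (simp add: tree_cut_def)
  have sym: "sym ((ugraph_rel src tgt (T - {e'}))\<^sup>*)"
    by (intro sym_rtrancl) (auto simp: ugraph_rel_def sym_def)
  have "ugraph_rel src tgt T \<subseteq> (ugraph_rel src tgt (T - {e'}))\<^sup>*"
    using path symD[OF sym path] by (auto simp: ugraph_rel_def)
  then have "connected_by src tgt (T - {e'})"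
    using connected_tree rtrancl_subset_rtrancl unfolding connected_by_def by blast
  with assms spanning_tree show False
    by (simp add: spanning_tree_def)
qed

lemma tree_cut_closed:
  assumes "e \<in> T" "e \<noteq> e'"
  shows "src e \<in> tree_cut e' \<longleftrightarrow> tgt e \<in> tree_cut e'"
proof -
  have "(src e, tgt e) \<in> ugraph_rel src tgt (T - {e'})" "(tgt e, src e) \<in> ugraph_rel src tgt (T - {e'})"
    using assms unfolding ugraph_rel_def by blast+
  then show ?thesis
    unfolding tree_cut_def mem_Collect_eq by (blast intro: rtrancl_into_rtrancl)
qed

lemma sum_tree_cut_divergence:
  assumes supp: "\<And>e. e \<notin> T \<Longrightarrow> f $ e = 0" and "e' \<in> T"
  shows "(\<Sum>v\<in>tree_cut e'. (transpose B *v f) $ v) = f $ e'"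
proof -
  have "(\<Sum>v\<in>tree_cut e'. edge_vec e $ v) * f $ e = (if e = e' then f $ e' else 0)" for e
  proof -
    have "(\<Sum>v\<in>tree_cut e'. edge_vec e $ v)
        = (if src e \<in> tree_cut e' then 1 else 0) - (if tgt e \<in> tree_cut e' then 1 else 0)"
      by (simp add: edge_vec_def indic_vec_nth sum_subtractf sum.delta)
    then show ?thesis
      using src_in_tree_cut tgt_notin_tree_cut[OF \<open>e' \<in> T\<close>] tree_cut_closed[of e e'] supp[of e]
      by auto
  qed
  then have "(\<Sum>e\<in>UNIV. \<Sum>v\<in>tree_cut e'. f $ e * edge_vec e $ v) = f $ e'"
    by (simp add: sum_distrib_left[symmetric] mult.commute)
  then show ?thesis
    using transpose_incidence_on_vector[of UNIV f]
    by (simp add: sum_component sum.swap[of _ "tree_cut e'"] del: transpose_matrix_vector)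
qed

lemma tree_circulation_eq_0:
  assumes "\<And>e. e \<notin> T \<Longrightarrow> f $ e = 0" "transpose B *v f = 0"
  shows "f = 0"
  using sum_tree_cut_divergence[of f] assms by (metis vec_eq_iff zero_index sum.neutral)


lemma divergence_tree_potential_flow:
  "transpose B *v (R_inv *v (incidence_on src tgt T *v (pinv tree.L *v (indic_vec a - indic_vec b))))
     = indic_vec a - indic_vec b"
proof -
  have "avg_mat *v (indic_vec a - indic_vec b) = 0"
    by (rule avg_mat_eq_0) (simp add: inner_diff_right inner_commute[of ones] inner_indic_vec)
  then show ?thesis
    using transpose_incidence_on_R_inv_incidence_on[of UNIV T]
    by (simp add: tree.laplacian_pinv del: transpose_matrix_vector)
qed

lemma tree_flow_eq:
  "tree_flow src tgt T a b = R_inv *v (incidence_on src tgt T *v (pinv tree.L *v (indic_vec a - indic_vec b)))"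
  (is "_ = ?f")
  unfolding tree_flow_def
proof (rule the_equality)
  show "(\<forall>e. e \<notin> T \<longrightarrow> ?f $ e = 0) \<and> transpose B *v ?f = indic_vec a - indic_vec b"
    by (simp add: R_inv_incidence_on_nth divergence_tree_potential_flow del: transpose_matrix_vector)
  then show "f = ?f"
    if "(\<forall>e. e \<notin> T \<longrightarrow> f $ e = 0) \<and> transpose B *v f = indic_vec a - indic_vec b"
    for f
    using that tree_circulation_eq_0[of "f - ?f"]
    by (simp add: matrix_vector_mult_diff_distrib del: transpose_matrix_vector)
qed

lemma tree_flow_supported: "e \<notin> T \<Longrightarrow> tree_flow src tgt T a b $ e = 0"
  by (simp add: tree_flow_eq R_inv_incidence_on_nth)

lemma transpose_incidence_tree_flow:
  "transpose B *v tree_flow src tgt T a b = indic_vec a - indic_vec b"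
  by (simp add: tree_flow_eq divergence_tree_potential_flow del: transpose_matrix_vector)

lemma tree_flow_nth_abs_le: "\<bar>tree_flow src tgt T a b $ e\<bar> \<le> 1"
proof (cases "e \<in> T")
  case True
  then have "tree_flow src tgt T a b $ e = (\<Sum>v\<in>tree_cut e. (indic_vec a - indic_vec b) $ v)"
    using sum_tree_cut_divergence[of "tree_flow src tgt T a b" e] tree_flow_supported
    by (simp add: transpose_incidence_tree_flow del: transpose_matrix_vector)
  also have "\<dots> = (if a \<in> tree_cut e then 1 else 0) - (if b \<in> tree_cut e then 1 else 0)"
    by (simp add: indic_vec_nth sum_subtractf)
  finally show ?thesis
    by auto
qed (simp add: tree_flow_supported)


lemma inner_edge_vec_eq_tree_path_sum:
  "edge_vec e \<bullet> x = (\<Sum>e'\<in>tree_path src tgt T (src e) (tgt e).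
      tree_flow src tgt T (src e) (tgt e) $ e' * (edge_vec e' \<bullet> x))"
proof -
  let ?f = "tree_flow src tgt T (src e) (tgt e)"
  have "edge_vec e \<bullet> x = (transpose B *v ?f) \<bullet> x"
    by (simp add: transpose_incidence_tree_flow edge_vec_def del: transpose_matrix_vector)
  also have "\<dots> = ?f \<bullet> (B *v x)"
    by (simp add: inner_matrix_vector del: transpose_matrix_vector)
  also have "\<dots> = (\<Sum>e'\<in>UNIV. ?f $ e' * (edge_vec e' \<bullet> x))"
    using incidence_on_vector[of UNIV x] by (simp add: inner_vec_def)
  also have "\<dots> = (\<Sum>e'\<in>tree_path src tgt T (src e) (tgt e). ?f $ e' * (edge_vec e' \<bullet> x))"
    by (rule sum.mono_neutral_right) (use tree_flow_supported in \<open>auto simp: tree_path_def\<close>)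
  finally show ?thesis .
qed

lemma edge_energy_le_stretch:
  "(edge_vec e \<bullet> x)\<^sup>2 / r e \<le> stretch src tgt r T e * (x \<bullet> (tree.L *v x))"
proof -
  let ?P = "tree_path src tgt T (src e) (tgt e)"
  let ?f = "tree_flow src tgt T (src e) (tgt e)"
  have "(edge_vec e \<bullet> x)\<^sup>2 \<le> (\<Sum>e'\<in>?P. r e' * (?f $ e')\<^sup>2) * (\<Sum>e'\<in>?P. (edge_vec e' \<bullet> x)\<^sup>2 / r e')"
    unfolding inner_edge_vec_eq_tree_path_sum[of e x]
    by (rule Cauchy_Schwarz_ineq_sum_divide) (rule r_pos)
  also have "\<dots> \<le> (\<Sum>e'\<in>?P. r e') * (\<Sum>e'\<in>T. (edge_vec e' \<bullet> x)\<^sup>2 / r e')"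
  proof (intro mult_mono sum_mono sum_mono2)
    show "r e' * (?f $ e')\<^sup>2 \<le> r e'" for e'
      using tree_flow_nth_abs_le[of "src e" "tgt e" e'] r_pos[of e']
      by (simp add: abs_square_le_1 mult_left_le less_imp_le)
  qed (auto simp: tree_path_def r_pos less_imp_le intro: sum_nonneg)
  also have "\<dots> = (\<Sum>e'\<in>?P. r e') * (x \<bullet> (tree.L *v x))"
    by (simp add: laplacian_form power2_eq_square)
  finally show ?thesis
    using r_pos[of e] by (simp add: stretch_def divide_right_mono mult_ac)
qed

lemma laplacian_le_stretch:
  "x \<bullet> (graph.L *v x) \<le> stretch_tree src tgt r T * (x \<bullet> (tree.L *v x))"
proof -
  have "x \<bullet> (graph.L *v x) = (\<Sum>e\<in>UNIV. (edge_vec e \<bullet> x)\<^sup>2 / r e)"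
    by (simp add: laplacian_form power2_eq_square)
  also have "\<dots> \<le> (\<Sum>e\<in>UNIV. stretch src tgt r T e * (x \<bullet> (tree.L *v x)))"
    by (intro sum_mono edge_energy_le_stretch)
  finally show ?thesis
    by (simp add: stretch_tree_def sum_distrib_right)
qed

lemma stretch_tree_nonneg: "0 \<le> stretch_tree src tgt r T"
  unfolding stretch_tree_def stretch_def
  by (intro sum_nonneg mult_nonneg_nonneg) (auto simp: r_pos less_imp_le intro: sum_nonneg)

lemma pinv_tree_laplacian_le_stretch:
  "y \<bullet> (pinv tree.L *v y) \<le> stretch_tree src tgt r T * (y \<bullet> (pinv graph.L *v y))"
proof -
  define g where "g = pinv tree.L *v y"
  define h where "h = pinv graph.L *v y"
  have "h \<bullet> (graph.L *v g) = g \<bullet> (graph.L *v h)"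
    by (simp add: laplacian_form mult.commute)
  also have "\<dots> = g \<bullet> y"
    using inner_avg_mat_eq_0[OF tree.inner_ones_pinv_laplacian, of y y]
    by (simp add: h_def g_def graph.laplacian_pinv inner_diff_left inner_commute[of "pinv tree.L *v y"])
  finally have "y \<bullet> g = h \<bullet> (graph.L *v g)"
    by (simp add: inner_commute)
  then have "(y \<bullet> g)\<^sup>2 \<le> (h \<bullet> (graph.L *v h)) * (g \<bullet> (graph.L *v g))"
    by (simp add: laplacian_Cauchy_Schwarz)
  also have "\<dots> \<le> (y \<bullet> h) * (stretch_tree src tgt r T * (y \<bullet> g))"
    using laplacian_le_stretch[of g] graph.pinv_laplacian_psd[of y]
    by (simp add: g_def h_def graph.pinv_laplacian_form tree.pinv_laplacian_form mult_left_mono)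
  finally have "(y \<bullet> g)\<^sup>2 \<le> (y \<bullet> g) * (stretch_tree src tgt r T * (y \<bullet> h))"
    by (simp only: mult_ac)
  then show ?thesis
    using stretch_tree_nonneg graph.pinv_laplacian_psd[of y]
    by (simp add: g_def h_def le_of_square_le_mult)
qed


lemma cycle_vec_circulation: "transpose B *v cycle_vec src tgt T e = 0"
  by (simp add: cycle_vec_def matrix_vector_mult_diff_distrib transpose_incidence_indic_vec
      transpose_incidence_tree_flow edge_vec_def del: transpose_matrix_vector)

lemma cycle_vec_nth_off_tree: "e' \<notin> T \<Longrightarrow> cycle_vec src tgt T e $ e' = (if e' = e then 1 else 0)"
  by (simp add: cycle_vec_def indic_vec_nth tree_flow_supported)

lemma cycle_res_eq_energy: "cycle_res src tgt r T e = energy (cycle_vec src tgt T e)"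
  by (simp add: cycle_res_def energy_def Let_def)

lemma resistance_le_cycle_res:
  assumes "e \<notin> T"
  shows "r e \<le> cycle_res src tgt r T e"
proof -
  have "r e = r e * (cycle_vec src tgt T e $ e)\<^sup>2"
    using cycle_vec_nth_off_tree[OF assms] by simp
  also have "\<dots> \<le> energy (cycle_vec src tgt T e)"
    unfolding energy_eq_sum by (rule member_le_sum) (auto simp: r_pos less_imp_le)
  finally show ?thesis
    by (simp add: cycle_res_eq_energy)
qed

lemma proj_e_vector:
  "proj_e src tgt r T e *v x
     = x - ((cycle_vec src tgt T e \<bullet> (R *v x)) / cycle_res src tgt r T e) *\<^sub>R cycle_vec src tgt T e"
  by (simp add: proj_e_def Let_def matrix_vector_mult_diff_rdistrib outer_vector
      scaleR_matrix_vector_assoc[symmetric] matrix_vector_mul_assoc[symmetric])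

lemma energy_proj_e:
  assumes "e \<notin> T"
  shows "energy (proj_e src tgt r T e *v x)
    = energy x - (cycle_vec src tgt T e \<bullet> (R *v x))\<^sup>2 / cycle_res src tgt r T e"
proof -
  define c where "c = cycle_vec src tgt T e"
  define d where "d = c \<bullet> (R *v x)"
  have pos: "0 < energy c"
    using resistance_le_cycle_res[OF assms] r_pos[of e] by (simp add: c_def cycle_res_eq_energy)
  have "energy (proj_e src tgt r T e *v x) = energy (x - (d / energy c) *\<^sub>R c)"
    by (simp add: proj_e_vector c_def d_def cycle_res_eq_energy)
  also have "\<dots> = energy x - 2 * (x \<bullet> (R *v ((d / energy c) *\<^sub>R c))) + energy ((d / energy c) *\<^sub>R c)"
    by (rule energy_diff)
  also have "\<dots> = energy x - 2 * (d / energy c) * d + (d / energy c)\<^sup>2 * energy c"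
    by (simp add: energy_def matrix_vector_mult_scaleR inner_diag_commute[of x c] d_def
        power2_eq_square)
  also have "\<dots> = energy x - d\<^sup>2 / energy c"
    using pos by (simp add: field_simps power2_eq_square)
  finally show ?thesis
    by (simp add: c_def d_def cycle_res_eq_energy)
qed

lemma proj_e_circulation:
  "transpose B *v x = 0 \<Longrightarrow> transpose B *v (proj_e src tgt r T e *v x) = 0"
  by (simp add: proj_e_vector matrix_vector_mult_diff_distrib matrix_vector_mult_scaleR
      cycle_vec_circulation del: transpose_matrix_vector)

lemma proj_e_potential_flow: "proj_e src tgt r T e *v (R_inv *v (B *v y)) = R_inv *v (B *v y)"
proof -
  have "cycle_vec src tgt T e \<bullet> (R *v (R_inv *v (B *v y))) = 0"
    using inner_matrix_vector[of "transpose B" "cycle_vec src tgt T e" y]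
    by (simp add: R_R_inv_vector cycle_vec_circulation del: transpose_matrix_vector)
  then show ?thesis
    by (simp add: proj_e_vector)
qed

lemma circulation_eq_sum_cycle_vec:
  assumes "transpose B *v x = 0"
  shows "x = (\<Sum>e\<in>UNIV - T. x $ e *\<^sub>R cycle_vec src tgt T e)"
proof -
  have "x - (\<Sum>e\<in>UNIV - T. x $ e *\<^sub>R cycle_vec src tgt T e) = 0"
  proof (rule tree_circulation_eq_0)
    show "(x - (\<Sum>e\<in>UNIV - T. x $ e *\<^sub>R cycle_vec src tgt T e)) $ e' = 0" if "e' \<notin> T" for e'
      using that by (simp add: sum_component cycle_vec_nth_off_tree if_distrib if_distribR cong: if_cong)
    show "transpose B *v (x - (\<Sum>e\<in>UNIV - T. x $ e *\<^sub>R cycle_vec src tgt T e)) = 0"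
      using assms by (simp add: matrix_vector_mult_diff_distrib matrix_vector_sum
          matrix_vector_mult_scaleR cycle_vec_circulation del: transpose_matrix_vector)
  qed
  then show ?thesis
    by simp
qed


lemma energy_circulation_le:
  assumes "transpose B *v x = 0"
  shows "energy x \<le> (\<Sum>e\<in>UNIV - T. (cycle_vec src tgt T e \<bullet> (R *v x))\<^sup>2 / r e)"
proof -
  let ?d = "\<lambda>e. cycle_vec src tgt T e \<bullet> (R *v x)"
  have "energy x = (\<Sum>e\<in>UNIV - T. x $ e *\<^sub>R cycle_vec src tgt T e) \<bullet> (R *v x)"
    unfolding energy_def by (subst circulation_eq_sum_cycle_vec[OF assms]) (rule refl)
  also have "\<dots> = (\<Sum>e\<in>UNIV - T. x $ e * ?d e)"
    by (simp add: inner_sum_left)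
  finally have "(energy x)\<^sup>2 \<le> (\<Sum>e\<in>UNIV - T. r e * (x $ e)\<^sup>2) * (\<Sum>e\<in>UNIV - T. (?d e)\<^sup>2 / r e)"
    by (simp add: Cauchy_Schwarz_ineq_sum_divide r_pos)
  also have "\<dots> \<le> energy x * (\<Sum>e\<in>UNIV - T. (?d e)\<^sup>2 / r e)"
    unfolding energy_eq_sum
    by (intro mult_right_mono sum_mono2 sum_nonneg) (simp_all add: r_pos less_imp_le)
  finally show ?thesis
    by (rule le_of_square_le_mult[rotated]) (simp add: sum_nonneg r_pos less_imp_le)
qed

context
  assumes non_tree_edge: "UNIV - T \<noteq> {}"
begin

lemma tau_ge_1: "1 \<le> tau src tgt r T"
proof -
  obtain e where e: "e \<in> UNIV - T"
    using non_tree_edge by blast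
  then have "1 \<le> cycle_res src tgt r T e / r e"
    using resistance_le_cycle_res[of e] r_pos[of e] by simp
  also have "\<dots> \<le> tau src tgt r T"
    unfolding tau_def
    by (rule member_le_sum[OF e]) (simp_all add: cycle_res_eq_energy energy_nonneg r_pos less_imp_le)
  finally show ?thesis .
qed

lemma edge_prob_nonneg: "0 \<le> edge_prob src tgt r T e"
  using tau_ge_1 r_pos[of e] energy_nonneg[of "cycle_vec src tgt T e"]
  by (simp add: edge_prob_def cycle_res_eq_energy)

lemma sum_edge_prob: "(\<Sum>e\<in>UNIV - T. edge_prob src tgt r T e) = 1"
proof -
  have "(\<Sum>e\<in>UNIV - T. edge_prob src tgt r T e)
      = (\<Sum>e\<in>UNIV - T. cycle_res src tgt r T e / r e) / tau src tgt r T"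
    by (simp add: edge_prob_def sum_divide_distrib)
  then show ?thesis
    using tau_ge_1 by (simp add: tau_def)
qed

lemma expected_energy_proj_e:
  assumes "transpose B *v x = 0"
  shows "(\<Sum>e\<in>UNIV - T. edge_prob src tgt r T e * energy (proj_e src tgt r T e *v x))
    \<le> (1 - 1 / tau src tgt r T) * energy x"
proof -
  let ?d = "\<lambda>e. cycle_vec src tgt T e \<bullet> (R *v x)"
  let ?\<tau> = "tau src tgt r T"
  have "edge_prob src tgt r T e * energy (proj_e src tgt r T e *v x)
      = edge_prob src tgt r T e * energy x - (?d e)\<^sup>2 / r e / ?\<tau>" if "e \<in> UNIV - T" for e
    using that energy_proj_e[of e x] resistance_le_cycle_res[of e] r_pos[of e] tau_ge_1
    by (simp add: edge_prob_def field_simps)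
  then have "(\<Sum>e\<in>UNIV - T. edge_prob src tgt r T e * energy (proj_e src tgt r T e *v x))
      = energy x - (\<Sum>e\<in>UNIV - T. (?d e)\<^sup>2 / r e) / ?\<tau>"
    by (simp add: sum_subtractf sum_distrib_right[symmetric] sum_edge_prob sum_divide_distrib)
  also have "\<dots> \<le> energy x - energy x / ?\<tau>"
    using energy_circulation_le[OF assms] tau_ge_1 by (simp add: divide_right_mono)
  finally show ?thesis
    by (simp add: algebra_simps)
qed

end

lemma proj_prod_Nil: "proj_prod src tgt r T [] = mat 1"
  by (simp add: proj_prod_def)

lemma proj_prod_snoc: "proj_prod src tgt r T (es @ [e]) = proj_e src tgt r T e ** proj_prod src tgt r T es"
  by (simp add: proj_prod_def)

lemma proj_prod_circulation:
  "transpose B *v x = 0 \<Longrightarrow> transpose B *v (proj_prod src tgt r T es *v x) = 0"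
  by (induction es rule: rev_induct)
    (simp_all add: proj_prod_Nil proj_prod_snoc matrix_vector_mul_assoc[symmetric] proj_e_circulation
      del: transpose_matrix_vector)

lemma proj_prod_potential_flow:
  "proj_prod src tgt r T es *v (R_inv *v (B *v y)) = R_inv *v (B *v y)"
  by (induction es rule: rev_induct)
    (simp_all add: proj_prod_Nil proj_prod_snoc matrix_vector_mul_assoc[symmetric] proj_e_potential_flow)


text \<open>F_K - R_inv B L^+ = Pi_(e_K) ... Pi_(e_1) flow_error L_T^+, because every projection fixes
  the potential flows R_inv B y.\<close>

definition flow_error :: "real^'v^'e" where
  "flow_error = R_inv ** incidence_on src tgt T - R_inv ** B ** pinv graph.L ** tree.L"

lemma flow_error_vector:
  "flow_error *v z = R_inv *v (incidence_on src tgt T *v z) - R_inv *v (B *v (pinv graph.L *v (tree.L *v z)))"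
  by (simp add: flow_error_def matrix_vector_mult_diff_rdistrib matrix_vector_mul_assoc[symmetric])

lemma flow_error_ones: "flow_error *v ones = 0"
  by (simp add: flow_error_vector incidence_on_ones laplacian_ones)

lemma flow_error_circulation: "transpose B *v (flow_error *v z) = 0"
  using transpose_incidence_on_R_inv_incidence_on[of UNIV T z]
    transpose_incidence_on_R_inv_incidence_on[of UNIV UNIV "pinv graph.L *v (tree.L *v z)"]
  by (simp add: flow_error_vector matrix_vector_mult_diff_distrib graph.laplacian_pinv
      avg_mat_eq_0[OF inner_ones_laplacian] del: transpose_matrix_vector)

lemma energy_flow_error_le: "energy (flow_error *v z) \<le> z \<bullet> (tree.L *v z)"
proof -
  define f where "f = R_inv *v (incidence_on src tgt T *v z)"
  define g where "g = pinv graph.L *v (tree.L *v z)"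
  have graph_g: "graph.L *v g = tree.L *v z"
    by (simp add: g_def graph.laplacian_pinv avg_mat_eq_0[OF inner_ones_laplacian])
  have "f \<bullet> (R *v (R_inv *v (B *v g))) = g \<bullet> (tree.L *v z)"
    using transpose_incidence_on_R_inv_incidence_on[of UNIV T z]
    by (simp add: f_def R_R_inv_vector inner_commute[of _ "B *v g"] inner_matrix_vector
        del: transpose_matrix_vector)
  moreover have "energy (R_inv *v (B *v g)) = g \<bullet> (tree.L *v z)"
    using energy_potential_flow[of UNIV g] by (simp add: graph_g)
  moreover have "0 \<le> g \<bullet> (tree.L *v z)"
    using graph.pinv_laplacian_psd[of "tree.L *v z"] by (simp add: g_def inner_commute)
  ultimately show ?thesis
    using energy_potential_flow[of T z]
    by (simp add: flow_error_vector energy_diff f_def g_def)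
qed

lemma potential_flow_error_le: "tree.potential flow_error \<le> real CARD('v) - 1"
proof -
  have "tree.potential flow_error
      \<le> (\<Sum>e\<in>T. (pinv tree.L *v edge_vec e) \<bullet> (tree.L *v (pinv tree.L *v edge_vec e)) / r e)"
    unfolding tree.potential_def
    by (intro sum_mono divide_right_mono energy_flow_error_le) (simp add: r_pos less_imp_le)
  also have "\<dots> = real CARD('v) - 1"
    by (simp add: tree.pinv_laplacian_form tree.sum_edge_pinv_laplacian_form)
  finally show ?thesis .
qed


definition error_potential :: "'e list \<Rightarrow> real" where
  "error_potential es = tree.potential (proj_prod src tgt r T es ** flow_error)"

lemma error_potential_nonneg: "0 \<le> error_potential es"
  by (simp add: error_potential_def tree.potential_nonneg)

lemma error_potential_Nil: "error_potential [] \<le> real CARD('v)"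
  using potential_flow_error_le by (simp add: error_potential_def proj_prod_Nil)

lemma expected_error_potential_step:
  assumes "UNIV - T \<noteq> {}"
  shows "(\<Sum>e\<in>UNIV - T. edge_prob src tgt r T e * error_potential (es @ [e]))
    \<le> (1 - 1 / tau src tgt r T) * error_potential es"
proof -
  define x where "x k = proj_prod src tgt r T es *v (flow_error *v (pinv tree.L *v edge_vec k))" for k
  have "(\<Sum>e\<in>UNIV - T. edge_prob src tgt r T e * error_potential (es @ [e]))
      = (\<Sum>k\<in>T. (\<Sum>e\<in>UNIV - T. edge_prob src tgt r T e * energy (proj_e src tgt r T e *v x k)) / r k)"
    by (simp add: error_potential_def tree.potential_def proj_prod_snoc x_def
        matrix_vector_mul_assoc[symmetric] sum_distrib_left sum_divide_distrib sum.swap[of _ T])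
  also have "\<dots> \<le> (\<Sum>k\<in>T. (1 - 1 / tau src tgt r T) * energy (x k) / r k)"
    using expected_energy_proj_e[OF assms proj_prod_circulation[OF flow_error_circulation]]
    by (intro sum_mono divide_right_mono) (simp_all add: x_def r_pos less_imp_le)
  also have "\<dots> = (1 - 1 / tau src tgt r T) * error_potential es"
    by (simp add: error_potential_def tree.potential_def x_def matrix_vector_mul_assoc[symmetric]
        sum_distrib_left)
  finally show ?thesis .
qed

abbreviation "approx_flow es \<equiv> proj_prod src tgt r T es ** R_inv ** incidence_on src tgt T ** pinv tree.L"
abbreviation "approx_voltage es \<equiv> pinv tree.L ** transpose (incidence_on src tgt T) ** approx_flow es"

lemma approx_flow_error_vector:
  "(approx_flow es - R_inv ** B ** pinv graph.L) *v y
     = proj_prod src tgt r T es *v (flow_error *v (pinv tree.L *v y))"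
proof -
  have "pinv graph.L *v (tree.L *v (pinv tree.L *v y)) = pinv graph.L *v y"
    by (simp add: tree.laplacian_pinv matrix_vector_mult_diff_distrib graph.pinv_laplacian_avg_mat)
  then show ?thesis
    by (simp add: matrix_vector_mult_diff_rdistrib matrix_vector_mul_assoc[symmetric] flow_error_vector
        matrix_vector_mult_diff_distrib proj_prod_potential_flow)
qed

lemma energy_approx_flow_error_le:
  assumes "error_potential es \<le> \<epsilon>"
  shows "energy ((approx_flow es - R_inv ** B ** pinv graph.L) *v y) \<le> \<epsilon> * (y \<bullet> (pinv tree.L *v y))"
proof -
  have "(proj_prod src tgt r T es ** flow_error) *v ones = 0"
    by (simp add: matrix_vector_mul_assoc[symmetric] flow_error_ones)
  then have "energy ((approx_flow es - R_inv ** B ** pinv graph.L) *v y)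
      \<le> error_potential es * (y \<bullet> (pinv tree.L *v y))"
    using tree.energy_le_potential[of "proj_prod src tgt r T es ** flow_error" "pinv tree.L *v y"]
    by (simp add: approx_flow_error_vector error_potential_def matrix_vector_mul_assoc[symmetric]
        tree.pinv_laplacian_form)
  also have "\<dots> \<le> \<epsilon> * (y \<bullet> (pinv tree.L *v y))"
    using assms tree.pinv_laplacian_psd by (rule mult_right_mono)
  finally show ?thesis .
qed

lemma approx_voltage_error_vector:
  "(approx_voltage es - pinv graph.L) *v y
     = pinv tree.L *v (transpose (incidence_on src tgt T) *v ((approx_flow es - R_inv ** B ** pinv graph.L) *v y))"
proof -
  have "pinv tree.L *v (transpose (incidence_on src tgt T) *v (R_inv *v (B *v (pinv graph.L *v y))))
      = pinv graph.L *v y"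
    using transpose_incidence_on_R_inv_incidence_on[of T UNIV "pinv graph.L *v y"]
    by (simp add: tree.pinv_laplacian avg_mat_eq_0[OF graph.inner_ones_pinv_laplacian]
        del: transpose_matrix_vector)
  then show ?thesis
    by (simp add: matrix_vector_mult_diff_rdistrib matrix_vector_mul_assoc[symmetric]
        matrix_vector_mult_diff_distrib del: transpose_matrix_vector)
qed

lemma transpose_incidence_tree_form_le_energy:
  "(transpose (incidence_on src tgt T) *v f) \<bullet> (pinv tree.L *v (transpose (incidence_on src tgt T) *v f))
     \<le> energy f"
proof -
  define w where "w = transpose (incidence_on src tgt T) *v f"
  define v where "v = pinv tree.L *v w"
  have "w \<bullet> v = (incidence_on src tgt T *v v) \<bullet> f"
    unfolding w_def by (metis inner_commute inner_matrix_vector)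
  also have "\<dots> = (R_inv *v (incidence_on src tgt T *v v)) \<bullet> (R *v f)"
    using inner_diag_commute[of "R_inv *v (incidence_on src tgt T *v v)" f]
    by (simp add: R_R_inv_vector inner_commute)
  finally have "(w \<bullet> v)\<^sup>2 \<le> (v \<bullet> (tree.L *v v)) * energy f"
    using energy_Cauchy_Schwarz[of "R_inv *v (incidence_on src tgt T *v v)" f]
    by (simp add: energy_potential_flow)
  also have "v \<bullet> (tree.L *v v) = w \<bullet> v"
    by (simp add: v_def tree.pinv_laplacian_form inner_commute)
  finally show ?thesis
    using energy_nonneg by (simp add: w_def v_def le_of_square_le_mult)
qed


lemma approx_flow_error_loewner_le:
  assumes "error_potential es \<le> \<epsilon>"
  shows "transpose (approx_flow es - R_inv ** B ** pinv graph.L) ** R ** (approx_flow es - R_inv ** B ** pinv graph.L)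
    \<preceq>\<^sub>L \<epsilon> *\<^sub>R pinv tree.L"
proof (rule loewner_le_formI)
  show "transpose (\<epsilon> *\<^sub>R pinv tree.L) = \<epsilon> *\<^sub>R pinv tree.L"
    by (simp add: transpose_scalar tree.transpose_pinv_laplacian)
  show "x \<bullet> ((transpose (approx_flow es - R_inv ** B ** pinv graph.L) ** R
      ** (approx_flow es - R_inv ** B ** pinv graph.L)) *v x) \<le> x \<bullet> ((\<epsilon> *\<^sub>R pinv tree.L) *v x)" for x
    using energy_approx_flow_error_le[OF assms, of x]
    by (simp add: inner_transpose_mult_mult energy_def scaleR_matrix_vector_assoc[symmetric])
qed (simp add: transpose_congruence)

lemma pinv_tree_laplacian_loewner_le:
  assumes "0 \<le> \<epsilon>"
  shows "\<epsilon> *\<^sub>R pinv tree.L \<preceq>\<^sub>L (\<epsilon> * stretch_tree src tgt r T) *\<^sub>R pinv graph.L"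
proof (rule loewner_le_formI)
  show "x \<bullet> ((\<epsilon> *\<^sub>R pinv tree.L) *v x) \<le> x \<bullet> (((\<epsilon> * stretch_tree src tgt r T) *\<^sub>R pinv graph.L) *v x)" for x
    using mult_left_mono[OF pinv_tree_laplacian_le_stretch[of x] assms]
    by (simp add: scaleR_matrix_vector_assoc[symmetric] mult.assoc)
qed (simp_all add: transpose_scalar tree.transpose_pinv_laplacian graph.transpose_pinv_laplacian)

lemma approx_voltage_error_loewner_le:
  assumes "error_potential es \<le> \<epsilon>" "0 \<le> \<epsilon>"
  shows "transpose (approx_voltage es - pinv graph.L) ** graph.L ** (approx_voltage es - pinv graph.L)
    \<preceq>\<^sub>L (\<epsilon> * (stretch_tree src tgt r T)\<^sup>2) *\<^sub>R pinv graph.L"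
proof (rule loewner_le_formI)
  let ?st = "stretch_tree src tgt r T"
  fix y
  define f where "f = (approx_flow es - R_inv ** B ** pinv graph.L) *v y"
  define w where "w = transpose (incidence_on src tgt T) *v f"
  have "y \<bullet> ((transpose (approx_voltage es - pinv graph.L) ** graph.L ** (approx_voltage es - pinv graph.L)) *v y)
      = (pinv tree.L *v w) \<bullet> (graph.L *v (pinv tree.L *v w))"
    by (simp add: inner_transpose_mult_mult approx_voltage_error_vector f_def w_def
        del: transpose_matrix_vector)
  also have "\<dots> \<le> ?st * (w \<bullet> (pinv tree.L *v w))"
    using laplacian_le_stretch[of "pinv tree.L *v w"] by (simp add: tree.pinv_laplacian_form)
  also have "\<dots> \<le> ?st * energy f"
    using transpose_incidence_tree_form_le_energy[of f] stretch_tree_nonneg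
    by (simp add: w_def mult_left_mono)
  also have "\<dots> \<le> ?st * (\<epsilon> * (?st * (y \<bullet> (pinv graph.L *v y))))"
    using energy_approx_flow_error_le[OF assms(1), of y] pinv_tree_laplacian_le_stretch[of y]
      mult_left_mono[OF _ assms(2)] stretch_tree_nonneg
    by (simp add: f_def mult_left_mono order_trans)
  finally show "y \<bullet> ((transpose (approx_voltage es - pinv graph.L) ** graph.L ** (approx_voltage es - pinv graph.L)) *v y)
      \<le> y \<bullet> (((\<epsilon> * ?st\<^sup>2) *\<^sub>R pinv graph.L) *v y)"
    by (simp add: scaleR_matrix_vector_assoc[symmetric] power2_eq_square mult_ac)
qed (simp_all add: transpose_congruence transpose_laplacian transpose_scalar graph.transpose_pinv_laplacian)

end

section \<open>Independent sampling\<close>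

definition iid_expectation :: "('e \<Rightarrow> real) \<Rightarrow> 'e set \<Rightarrow> nat \<Rightarrow> ('e list \<Rightarrow> real) \<Rightarrow> real" where
  "iid_expectation q D K f = (\<Sum>es\<in>{es. set es \<subseteq> D \<and> length es = K}. prod_list (map q es) * f es)"

lemma lists_length_Suc_snoc:
  "{es. set es \<subseteq> D \<and> length es = Suc K} = (\<lambda>(es, e). es @ [e]) ` ({es. set es \<subseteq> D \<and> length es = K} \<times> D)"
proof (intro equalityI subsetI)
  fix xs assume xs: "xs \<in> {es. set es \<subseteq> D \<and> length es = Suc K}"
  then have "xs \<noteq> []"
    by auto
  with xs have "xs = butlast xs @ [last xs]" "butlast xs \<in> {es. set es \<subseteq> D \<and> length es = K}" "last xs \<in> D"
    by (auto dest: in_set_butlastD)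
  then show "xs \<in> (\<lambda>(es, e). es @ [e]) ` ({es. set es \<subseteq> D \<and> length es = K} \<times> D)"
    by (metis (no_types, lifting) SigmaI case_prod_conv image_eqI)
qed auto

lemma iid_expectation_Suc:
  assumes "finite D"
  shows "iid_expectation q D (Suc K) f = iid_expectation q D K (\<lambda>es. \<Sum>e\<in>D. q e * f (es @ [e]))"
proof -
  have "inj_on (\<lambda>(es, e). es @ [e]) ({es. set es \<subseteq> D \<and> length es = K} \<times> D)"
    by (auto simp: inj_on_def)
  then show ?thesis
    unfolding iid_expectation_def lists_length_Suc_snoc
    by (simp add: sum.reindex sum.cartesian_product' sum_distrib_left mult_ac)
qed

lemma iid_expectation_0: "iid_expectation q D 0 f = f []"
proof -
  have "{es. set es \<subseteq> D \<and> length es = 0} = {[]}"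
    by auto
  then show ?thesis
    by (simp add: iid_expectation_def)
qed

lemma iid_expectation_const:
  assumes "finite D" "sum q D = 1"
  shows "iid_expectation q D K (\<lambda>_. c) = c"
proof (induction K)
  case 0
  then show ?case
    by (simp add: iid_expectation_0)
next
  case (Suc K)
  then show ?case
    using assms by (simp add: iid_expectation_Suc sum_distrib_right[symmetric])
qed

lemma iid_expectation_mono:
  assumes "\<forall>e\<in>D. 0 \<le> q e" "\<And>es. set es \<subseteq> D \<Longrightarrow> f es \<le> g es"
  shows "iid_expectation q D K f \<le> iid_expectation q D K g"
  unfolding iid_expectation_def
  using assms by (intro sum_mono mult_left_mono prod_list_nonneg) auto

lemma iid_expectation_contract:
  assumes "finite D" "\<forall>e\<in>D. 0 \<le> q e" "0 \<le> c"
    and step: "\<And>es. set es \<subseteq> D \<Longrightarrow> (\<Sum>e\<in>D. q e * f (es @ [e])) \<le> c * f es"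
  shows "iid_expectation q D K f \<le> c ^ K * f []"
proof (induction K)
  case 0
  then show ?case
    by (simp add: iid_expectation_0)
next
  case (Suc K)
  have "iid_expectation q D (Suc K) f \<le> iid_expectation q D K (\<lambda>es. c * f es)"
    unfolding iid_expectation_Suc[OF assms(1)] using assms(2) step by (rule iid_expectation_mono)
  also have "\<dots> = c * iid_expectation q D K f"
    by (simp add: iid_expectation_def sum_distrib_left mult_ac)
  also have "\<dots> \<le> c ^ Suc K * f []"
    using mult_left_mono[OF Suc assms(3)] by (simp add: mult.assoc)
  finally show ?case .
qed

lemma iid_prob_ge_Markov:
  assumes "finite D" "\<forall>e\<in>D. 0 \<le> q e" "sum q D = 1" "0 < \<epsilon>"
    and f_nonneg: "\<And>es. 0 \<le> f es"
    and good: "\<And>es. set es \<subseteq> D \<Longrightarrow> length es = K \<Longrightarrow> f es \<le> \<epsilon> \<Longrightarrow> P es"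
  shows "1 - iid_expectation q D K f / \<epsilon> \<le> iid_prob q D K P"
proof -
  have "iid_expectation q D K (\<lambda>es. 1 - f es / \<epsilon>)
      = iid_expectation q D K (\<lambda>_. 1) - iid_expectation q D K f / \<epsilon>"
    unfolding iid_expectation_def by (simp add: right_diff_distrib sum_subtractf sum_divide_distrib)
  then have "1 - iid_expectation q D K f / \<epsilon> = iid_expectation q D K (\<lambda>es. 1 - f es / \<epsilon>)"
    by (simp add: iid_expectation_const[OF assms(1,3)])
  also have "\<dots> \<le> iid_prob q D K P"
    unfolding iid_expectation_def iid_prob_def
  proof (rule sum_mono)
    fix es assume es: "es \<in> {es. set es \<subseteq> D \<and> length es = K}"
    have "0 \<le> prod_list (map q es)"
      using es assms(2) by (intro prod_list_nonneg) auto
    moreover have "1 - f es / \<epsilon> \<le> (if P es then 1 else 0)"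
    proof (cases "P es")
      case True
      then show ?thesis
        using f_nonneg[of es] \<open>0 < \<epsilon>\<close> by simp
    next
      case False
      then have "\<epsilon> < f es"
        using good[of es] es by (auto simp: not_le[symmetric])
      then show ?thesis
        using False \<open>0 < \<epsilon>\<close> by (simp add: field_simps)
    qed
    ultimately have "prod_list (map q es) * (1 - f es / \<epsilon>) \<le> prod_list (map q es) * (if P es then 1 else 0)"
      by (rule mult_left_mono[rotated])
    then show "prod_list (map q es) * (1 - f es / \<epsilon>) \<le> (if P es then prod_list (map q es) else 0)"
      by (simp split: if_splits)
  qed
  finally show ?thesis .
qed

lemma power_one_minus_inverse_ceiling_le:
  fixes \<tau> n \<delta> :: real
  assumes "1 \<le> \<tau>" "0 < n" "0 < \<delta>"
  shows "(1 - 1 / \<tau>) ^ nat \<lceil>\<tau> * ln (n / \<delta>)\<rceil> * n \<le> \<delta>"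
proof -
  define K where "K = nat \<lceil>\<tau> * ln (n / \<delta>)\<rceil>"
  have "(1 - 1 / \<tau>) ^ K \<le> exp (- 1 / \<tau>) ^ K"
    using assms(1) exp_ge_add_one_self[of "- 1 / \<tau>"] by (intro power_mono) simp_all
  also have "\<dots> = exp (- real K / \<tau>)"
    by (simp add: exp_of_nat_mult[symmetric])
  also have "\<dots> \<le> exp (- ln (n / \<delta>))"
  proof -
    have "\<tau> * ln (n / \<delta>) \<le> real K"
      unfolding K_def by linarith
    then show ?thesis
      using assms(1) by (simp add: field_simps)
  qed
  also have "\<dots> = \<delta> / n"
    using assms(2,3) by (simp add: exp_minus exp_ln)
  finally show ?thesis
    using assms(2) by (simp add: K_def field_simps)
qed

theorem theorem10p3:
  fixes src tgt :: "'e::finite \<Rightarrow> 'v::finite"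
    and r :: "'e \<Rightarrow> real" and T :: "'e set"
    and \<epsilon> p :: real
  assumes no_loops: "\<forall>e. src e \<noteq> tgt e"
    and conn: "connected_by src tgt (UNIV :: 'e set)"
    and r_pos: "\<forall>e. r e > 0"
    and tree: "spanning_tree src tgt T"
    and nontriv: "UNIV - T \<noteq> {}"
    and eps: "\<epsilon> > 0"
    and p: "0 < p" "p < 1"
  defines "B \<equiv> incidence src tgt"
    and "BT \<equiv> incidence_on src tgt T"
    and "R \<equiv> diag_mat r"
    and "Rinv \<equiv> diag_mat (\<lambda>e. 1 / r e)"
    and "L \<equiv> laplacian src tgt r UNIV"
    and "LTr \<equiv> laplacian src tgt r T"
    and "K \<equiv> nat \<lceil>tau src tgt r T * ln (real CARD('v) / (\<epsilon> * p))\<rceil>"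
    and "st \<equiv> stretch_tree src tgt r T"
  shows "iid_prob (edge_prob src tgt r T) (UNIV - T) K
           (\<lambda>es. let F = proj_prod src tgt r T es ** Rinv ** BT ** pinv LTr;
                      V = pinv LTr ** transpose BT ** F
                  in transpose (F - Rinv ** B ** pinv L) ** R ** (F - Rinv ** B ** pinv L)
                        \<preceq>\<^sub>L \<epsilon> *\<^sub>R pinv LTr
                   \<and> \<epsilon> *\<^sub>R pinv LTr \<preceq>\<^sub>L (\<epsilon> * st) *\<^sub>R pinv L
                   \<and> transpose (V - pinv L) ** L ** (V - pinv L) \<preceq>\<^sub>L (\<epsilon> * st\<^sup>2) *\<^sub>R pinv L)
         \<ge> 1 - p"
proof -
  interpret G: tree_network src tgt r T
    using no_loops r_pos tree by unfold_locales auto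
  let ?q = "edge_prob src tgt r T" and ?\<tau> = "tau src tgt r T"
  have \<tau>: "1 \<le> ?\<tau>"
    using G.tau_ge_1[OF nontriv] .
  have "iid_expectation ?q (UNIV - T) K G.error_potential \<le> (1 - 1 / ?\<tau>) ^ K * G.error_potential []"
    using \<tau> G.edge_prob_nonneg[OF nontriv] G.expected_error_potential_step[OF nontriv]
    by (intro iid_expectation_contract) auto
  also have "\<dots> \<le> (1 - 1 / ?\<tau>) ^ K * real CARD('v)"
    using G.error_potential_Nil \<tau> by (intro mult_left_mono) simp_all
  also have "\<dots> \<le> \<epsilon> * p"
    unfolding K_def using \<tau> eps p by (intro power_one_minus_inverse_ceiling_le) simp_all
  finally have bound: "1 - p \<le> 1 - iid_expectation ?q (UNIV - T) K G.error_potential / \<epsilon>"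
    using eps by (simp add: field_simps)
  show ?thesis
    unfolding B_def BT_def R_def Rinv_def L_def LTr_def st_def Let_def
    by (rule order_trans[OF bound iid_prob_ge_Markov])
      (use eps G.edge_prob_nonneg[OF nontriv] G.sum_edge_prob[OF nontriv] G.error_potential_nonneg in
        \<open>auto intro: G.approx_flow_error_loewner_le G.pinv_tree_laplacian_loewner_le
          G.approx_voltage_error_loewner_le\<close>)
qed

end
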